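(* For each $n$ let $p=p_n\in(0,1)$, let $X\sim\mathrm{Bin}(n,p)$ and $R = R_n = 1 + X + \frac{X(X-1)}{2}$. If $p(1-p)^{1/3} \gg n^{-1/9}$, i.e. $n^{1/9}p_n(1-p_n)^{1/3}\to\infty$ as $n\to\infty$, then $$\lim_{n\to\infty}\sup_{w\in\mathbb{R}}\left|\mathbb{P}\left(\frac{R-\mathbb{E}(R)}{\sqrt{\mathbb{V}(R)}}\le w\right) - \Phi(w)\right| = 0,$$ where $\Phi$ is the standard normal distribution function.
   Context: $\mathbb{V}$ denotes variance. $R$ is the number of regions formed when $n$ cuts are attempted on a pizza, each succeeding independently with probability $p$, with every successful cut meeting all prior successful cuts. The notation $a_n\gg b_n$ means $a_n/b_n\to\infty$. *)

theory Defs
  imports "HOL-Probability.Probability"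
begin

text \<open>Number of pizza regions when X cuts succeed: R = 1 + X + X(X-1)/2.\<close>
definition regions :: "nat \<Rightarrow> real" where
  "regions X = 1 + real X + real X * (real X - 1) / 2"

definition Phi :: "real \<Rightarrow> real" where
  "Phi w = cdf std_normal_distribution w"

end

theory Submission
  imports Defs
begin

(*
  R is a quadratic function of the binomial count X. With Z the standardized X,
  sigma^2 = n p (1 - p) and m = 2 n p + 1, exact moment computations give

    (R - E R) / sqrt (Var R) = (Z + c (Z^2 - 1)) / s   with  c = sigma / m,  |s - 1| <= 4 / m,

  so c -> 0 and s -> 1 as soon as sigma -> infinity; nothing more is used of the hypothesis.
  The distribution function of Z converges to Phi by the de Moivre-Laplace theorem (characteristic
  functions and Levy's continuity theorem), uniformly by Polya's theorem since Phi is continuous.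
  By Chebyshev's inequality Z is bounded with high probability, so the standardized R differs from Z
  by o(1) in probability, and a Slutsky-type argument carries the uniform convergence over to R.
*)

lemma real_choose_two: "real (k choose 2) = real k * (real k - 1) / 2"
  by (simp add: binomial_gbinomial gbinomial_prod_rev numeral_2_eq_2)

lemma real_choose_three: "real (k choose 3) = real k * (real k - 1) * (real k - 2) / 6"
  by (simp add: binomial_gbinomial gbinomial_altdef_of_nat eval_nat_numeral prod.atLeast0_lessThan_Suc)

lemma real_choose_four: "real (k choose 4) = real k * (real k - 1) * (real k - 2) * (real k - 3) / 24"
  by (simp add: binomial_gbinomial gbinomial_altdef_of_nat eval_nat_numeral prod.atLeast0_lessThan_Suc)

lemma sum_binomial_pmf_choose:
  fixes p :: real
  shows "(\<Sum>k\<le>n. real (n choose k) * p ^ k * (1 - p) ^ (n - k) * real (k choose r)) =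
         real (n choose r) * p ^ r"
proof (cases "r \<le> n")
  case False
  then show ?thesis by (auto intro!: sum.neutral simp: binomial_eq_0)
next
  case True
  define f where "f k = real (n choose k) * p ^ k * (1 - p) ^ (n - k) * real (k choose r)" for k
  have "(\<Sum>k\<le>n. f k) = (\<Sum>k\<in>{r..n}. f k)"
    by (rule sum.mono_neutral_right) (auto simp: f_def binomial_eq_0)
  also have "\<dots> = (\<Sum>j\<le>n - r. f (j + r))"
    using True sum.shift_bounds_cl_nat_ivl[of f 0 r "n - r"] by (simp add: atLeast0AtMost)
  also have "\<dots> = (\<Sum>j\<le>n - r.
      real (n choose r) * p ^ r * (real (n - r choose j) * p ^ j * (1 - p) ^ (n - r - j)))"
  proof (rule sum.cong)
    fix j assume j: "j \<in> {..n - r}"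
    have "(n choose (j + r)) * ((j + r) choose r) = (n choose r) * ((n - r) choose j)"
      using j True choose_mult[of r "j + r" n] by auto
    then show "f (j + r)
        = real (n choose r) * p ^ r * (real (n - r choose j) * p ^ j * (1 - p) ^ (n - r - j))"
      unfolding f_def by (simp add: power_add algebra_simps flip: of_nat_mult)
  qed simp
  also have "\<dots> = real (n choose r) * p ^ r * (p + (1 - p)) ^ (n - r)"
    unfolding binomial_ring[of p "1 - p" "n - r"] by (simp add: sum_distrib_left mult.assoc)
  finally show ?thesis by (simp add: f_def)
qed

lemma expectation_binomial_pmf_choose:
  assumes "p \<in> {0..1}"
  shows "measure_pmf.expectation (binomial_pmf n p) (\<lambda>k. real (k choose r)) = real (n choose r) * p ^ r"
  using assms by (simp add: expectation_binomial_pmf' sum_binomial_pmf_choose)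

lemma expectation_binomial_pmf:
  assumes "p \<in> {0..1}"
  shows "measure_pmf.expectation (binomial_pmf n p) real = real n * p"
  using expectation_binomial_pmf_choose[OF assms, of n 1] by simp

lemma variance_binomial_pmf:
  assumes "p \<in> {0..1}"
  shows "measure_pmf.variance (binomial_pmf n p) real = real n * p * (1 - p)"
proof -
  have sq: "(real k)\<^sup>2 = 2 * real (k choose 2) + real k" for k
    by (simp add: real_choose_two power2_eq_square field_simps)
  have "measure_pmf.expectation (binomial_pmf n p) (\<lambda>k. (real k)\<^sup>2)
      = real n * (real n - 1) * p\<^sup>2 + real n * p"
    using assms by (simp add: sq expectation_binomial_pmf expectation_binomial_pmf_choose
        integral_add integral_mult_right_zero) (simp add: real_choose_two)
  then show ?thesis
    using assms
    by (simp add: measure_pmf.variance_eq expectation_binomial_pmf power2_eq_square algebra_simps)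
qed

lemma npq_le_np:
  assumes "p \<in> {0..1}"
  shows "real n * p * (1 - p) \<le> real n * p"
  using assms mult_left_le[of "1 - p" "real n * p"] by simp

(* When the variance vanishes, division by zero makes every value standardize to 0. *)
definition standardized :: "'a pmf \<Rightarrow> ('a \<Rightarrow> real) \<Rightarrow> 'a \<Rightarrow> real" where
  "standardized P f x = (f x - measure_pmf.expectation P f) / sqrt (measure_pmf.variance P f)"

lemma standardized_binomial_pmf_real:
  assumes "p \<in> {0..1}"
  shows "standardized (binomial_pmf n p) real k = (real k - real n * p) / sqrt (real n * p * (1 - p))"
  unfolding standardized_def variance_binomial_pmf[OF assms] unfolding expectation_binomial_pmf[OF assms] ..

lemma prob_abs_standardized_gt_le:
  assumes "integrable (measure_pmf P) (\<lambda>x. (f x)\<^sup>2)" and M: "M > 0"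
  shows "measure_pmf.prob P {x. M < \<bar>standardized P f x\<bar>} \<le> 1 / M\<^sup>2"
proof (cases "measure_pmf.variance P f = 0")
  case True
  then show ?thesis using M by (simp add: standardized_def)
next
  case False
  define \<sigma> where "\<sigma> = sqrt (measure_pmf.variance P f)"
  have "measure_pmf.variance P f > 0"
    using False measure_pmf.variance_positive[of P f] by linarith
  then have \<sigma>: "\<sigma> > 0" "\<sigma>\<^sup>2 = measure_pmf.variance P f"
    by (simp_all add: \<sigma>_def)
  have "measure_pmf.prob P {x. M < \<bar>standardized P f x\<bar>}
      \<le> measure_pmf.prob P {x \<in> space P. M * \<sigma> \<le> \<bar>f x - measure_pmf.expectation P f\<bar>}"
    using \<sigma>(1) by (intro measure_pmf.finite_measure_mono)
      (auto simp: standardized_def abs_divide pos_less_divide_eq \<sigma>_def[symmetric])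
  also have "\<dots> \<le> measure_pmf.variance P f / (M * \<sigma>)\<^sup>2"
    using \<sigma>(1) M assms(1) by (intro measure_pmf.Chebyshev_inequality) auto
  also have "\<dots> = 1 / M\<^sup>2"
    using \<sigma>(1) by (simp add: power_mult_distrib flip: \<sigma>(2))
  finally show ?thesis .
qed

lemma regions_eq_choose: "regions k = 1 + real k + real (k choose 2)"
  by (simp add: regions_def real_choose_two)

lemma regions_squared_eq_choose:
  "(regions k)\<^sup>2
    = 1 + 3 * real k + 9 * real (k choose 2) + 12 * real (k choose 3) + 6 * real (k choose 4)"
  by (simp add: regions_def real_choose_two real_choose_three real_choose_four
      power2_eq_square field_simps)

lemma expectation_regions_binomial_pmf:
  assumes "p \<in> {0..1}"
  shows "measure_pmf.expectation (binomial_pmf n p) regions = 1 + real n * p + real (n choose 2) * p\<^sup>2"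
  using assms unfolding regions_eq_choose[abs_def]
  by (simp add: expectation_binomial_pmf expectation_binomial_pmf_choose integral_add)

lemma variance_regions_binomial_pmf:
  assumes "p \<in> {0..1}"
  shows "measure_pmf.variance (binomial_pmf n p) regions =
    real n * p * (1 - p) / 4 * ((2 * real n * p + 1)\<^sup>2 + 2 * (1 - 2 * p) * (2 * real n * p + 1)
      + 2 * real n * p * (1 - p) + 1 - 6 * p * (1 - p))"
proof -
  have "measure_pmf.expectation (binomial_pmf n p) (\<lambda>k. (regions k)\<^sup>2) =
      1 + 3 * (real n * p) + 9 * (real (n choose 2) * p\<^sup>2) + 12 * (real (n choose 3) * p ^ 3)
      + 6 * (real (n choose 4) * p ^ 4)"
    using assms by (simp add: regions_squared_eq_choose expectation_binomial_pmf
        expectation_binomial_pmf_choose integral_add)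
  moreover have "measure_pmf.variance (binomial_pmf n p) regions =
      measure_pmf.expectation (binomial_pmf n p) (\<lambda>k. (regions k)\<^sup>2)
      - (measure_pmf.expectation (binomial_pmf n p) regions)\<^sup>2"
    using assms by (simp add: measure_pmf.variance_eq)
  ultimately show ?thesis
    unfolding expectation_regions_binomial_pmf[OF assms] real_choose_two real_choose_three real_choose_four
    by (simp add: power2_eq_square power3_eq_cube power4_eq_xxxx field_simps)
qed

lemma regions_minus_expectation_binomial_pmf:
  assumes "p \<in> {0..1}"
  shows "regions k - measure_pmf.expectation (binomial_pmf n p) regions
    = (2 * real n * p + 1) / 2 * (real k - real n * p)
      + ((real k - real n * p)\<^sup>2 - real n * p * (1 - p)) / 2"
  using assms by (simp add: expectation_regions_binomial_pmf regions_def real_choose_two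
      power2_eq_square field_simps)

lemma variance_regions_binomial_pmf_approx:
  fixes p :: real
  assumes p: "0 < p" "p < 1" and n: "n > 0"
  obtains r where "\<bar>r\<bar> \<le> 4 / (2 * real n * p + 1)" and "1 + r > 0"
    and "measure_pmf.variance (binomial_pmf n p) regions
         = real n * p * (1 - p) * (2 * real n * p + 1)\<^sup>2 / 4 * (1 + r)"
proof -
  define m where "m = 2 * real n * p + 1"
  define X where "X = 2 * (1 - 2 * p) * m + 2 * (real n * p * (1 - p)) + 1 - 6 * (p * (1 - p))"
  have m: "m \<ge> 1" using p by (simp add: m_def)
  have "measure_pmf.variance (binomial_pmf n p) regions = real n * p * (1 - p) / 4 * (m\<^sup>2 + X)"
    using p unfolding X_def m_def by (simp add: variance_regions_binomial_pmf algebra_simps)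
  also have "\<dots> = real n * p * (1 - p) * m\<^sup>2 / 4 * (1 + X / m\<^sup>2)"
    using m by (simp add: field_simps)
  finally have V: "measure_pmf.variance (binomial_pmf n p) regions
      = real n * p * (1 - p) * m\<^sup>2 / 4 * (1 + X / m\<^sup>2)" .
  have X: "\<bar>X\<bar> \<le> 4 * m"
  proof -
    have "0 \<le> p * (1 - p)" using p by simp
    moreover have "p * (1 - p) \<le> 1 / 4"
      using zero_le_power2[of "p - 1 / 2"] by (simp add: power2_eq_square algebra_simps)
    moreover have "2 * (real n * p * (1 - p)) \<le> m"
      using p npq_le_np[of p n] unfolding m_def by simp
    moreover have "0 \<le> real n * p * (1 - p)" using p by simp
    moreover have "\<bar>2 * (1 - 2 * p) * m\<bar> \<le> 2 * m" using p m by (simp add: abs_mult)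
    ultimately show ?thesis using m unfolding X_def by linarith
  qed
  have pos: "0 < m\<^sup>2 + X"
  proof -
    have "m\<^sup>2 + X = (m + 1 - 2 * p)\<^sup>2 + 2 * p * (1 - p) * (real n - 1)"
      by (simp add: X_def m_def power2_eq_square algebra_simps)
    moreover have "m + 1 - 2 * p > 0" using m p by simp
    moreover have "0 \<le> 2 * p * (1 - p) * (real n - 1)" using p n by simp
    ultimately show ?thesis by (smt (verit) zero_less_power2)
  qed
  show thesis
  proof (rule that[of "X / m\<^sup>2"], fold m_def)
    have "\<bar>X / m\<^sup>2\<bar> \<le> 4 * m / m\<^sup>2"
      using X m by (simp add: abs_divide divide_right_mono)
    then show "\<bar>X / m\<^sup>2\<bar> \<le> 4 / m"
      using m by (simp add: power2_eq_square)
    show "1 + X / m\<^sup>2 > 0"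
      using pos m by (simp add: field_simps)
  qed (rule V)
qed

lemma abs_diff_one_le_abs_square_diff_one:
  fixes s :: real
  assumes "s \<ge> 0"
  shows "\<bar>s - 1\<bar> \<le> \<bar>s\<^sup>2 - 1\<bar>"
proof -
  have "\<bar>s - 1\<bar> \<le> \<bar>s - 1\<bar> * (s + 1)"
    using mult_left_mono[of 1 "s + 1" "\<bar>s - 1\<bar>"] assms by simp
  also have "\<dots> = \<bar>(s - 1) * (s + 1)\<bar>"
    using assms by (simp add: abs_mult)
  also have "(s - 1) * (s + 1) = s\<^sup>2 - 1"
    by (simp add: power2_eq_square algebra_simps)
  finally show ?thesis .
qed

lemma sqrt_npq_div_le:
  assumes "p \<in> {0..1}"
  shows "sqrt (real n * p * (1 - p)) / (2 * real n * p + 1) \<le> 1 / sqrt (2 * real n * p + 1)"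
proof -
  define m where "m = 2 * real n * p + 1"
  have m: "m \<ge> 1" using assms by (simp add: m_def)
  have "0 \<le> real n * p" using assms by simp
  then have "real n * p * (1 - p) \<le> m"
    using npq_le_np[OF assms, of n] unfolding m_def by linarith
  then have "sqrt (real n * p * (1 - p)) / m \<le> sqrt m / m"
    using m by (intro divide_right_mono real_sqrt_le_mono) auto
  also have "sqrt m / m = 1 / sqrt m" using m by (simp add: divide_simps)
  finally show ?thesis by (simp add: m_def)
qed

lemma regions_standardized_binomial_pmf:
  fixes p :: real
  assumes p: "0 < p" "p < 1" and n: "n > 0"
  shows "\<exists>c s. \<bar>c\<bar> \<le> 1 / sqrt (2 * real n * p + 1) \<and> \<bar>s - 1\<bar> \<le> 4 / (2 * real n * p + 1)
    \<and> (\<forall>k. standardized (binomial_pmf n p) regions k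
           = (standardized (binomial_pmf n p) real k
              + c * ((standardized (binomial_pmf n p) real k)\<^sup>2 - 1)) / s)"
proof -
  define m where "m = 2 * real n * p + 1"
  define \<sigma> where "\<sigma> = sqrt (real n * p * (1 - p))"
  have p01: "p \<in> {0..1}" using p by simp
  have m: "m \<ge> 1" using p by (simp add: m_def)
  have \<sigma>: "\<sigma> > 0" "\<sigma>\<^sup>2 = real n * p * (1 - p)" using p n by (auto simp: \<sigma>_def)
  obtain r where r: "\<bar>r\<bar> \<le> 4 / m" "1 + r > 0"
    and V: "measure_pmf.variance (binomial_pmf n p) regions = \<sigma>\<^sup>2 * m\<^sup>2 / 4 * (1 + r)"
    using variance_regions_binomial_pmf_approx[OF p n] unfolding m_def \<sigma>(2) by metis
  define s where "s = sqrt (1 + r)"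
  have s: "s \<ge> 0" "s\<^sup>2 = 1 + r" using r(2) by (simp_all add: s_def)
  have sqrt_V: "sqrt (measure_pmf.variance (binomial_pmf n p) regions) = \<sigma> * m / 2 * s"
    using \<sigma>(1) m r(2) by (simp add: V s_def real_sqrt_mult real_sqrt_divide)
  show ?thesis
  proof (intro exI conjI allI, fold m_def)
    show "\<bar>\<sigma> / m\<bar> \<le> 1 / sqrt m"
      using sqrt_npq_div_le[OF p01, of n] \<sigma>(1) m unfolding \<sigma>_def m_def by simp
    show "\<bar>s - 1\<bar> \<le> 4 / m"
      using abs_diff_one_le_abs_square_diff_one[OF s(1)] r(1) s(2) by simp
    fix k
    define z where "z = standardized (binomial_pmf n p) real k"
    have z: "z = (real k - real n * p) / \<sigma>"
      using p01 by (simp add: z_def \<sigma>_def standardized_binomial_pmf_real)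
    have "\<sigma> * m / 2 * (z + \<sigma> / m * (z\<^sup>2 - 1))
        = m / 2 * (real k - real n * p) + ((real k - real n * p)\<^sup>2 - \<sigma>\<^sup>2) / 2"
      using \<sigma>(1) m unfolding z by (simp add: field_simps power2_eq_square)
    also have "\<dots> = regions k - measure_pmf.expectation (binomial_pmf n p) regions"
      unfolding \<sigma>(2) regions_minus_expectation_binomial_pmf[OF p01] m_def ..
    finally have eq: "regions k - measure_pmf.expectation (binomial_pmf n p) regions
        = \<sigma> * m / 2 * (z + \<sigma> / m * (z\<^sup>2 - 1))" ..
    have "standardized (binomial_pmf n p) regions k
        = (\<sigma> * m / 2 * (z + \<sigma> / m * (z\<^sup>2 - 1))) / (\<sigma> * m / 2 * s)"
      unfolding standardized_def sqrt_V eq by (rule refl)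
    also have "\<dots> = (z + \<sigma> / m * (z\<^sup>2 - 1)) / s"
      using \<sigma>(1) m by simp
    finally show "standardized (binomial_pmf n p) regions k = (z + \<sigma> / m * (z\<^sup>2 - 1)) / s" .
  qed
qed

lemma regions_standardized_asymptotics:
  fixes p :: "nat \<Rightarrow> real"
  assumes p: "\<And>n. 0 < p n \<and> p n < 1"
    and npq: "filterlim (\<lambda>n. real n * p n * (1 - p n)) at_top sequentially"
  obtains c s :: "nat \<Rightarrow> real" where "c \<longlonglongrightarrow> 0" and "s \<longlonglongrightarrow> 1"
    and "\<forall>\<^sub>F n in sequentially. \<forall>k. standardized (binomial_pmf n (p n)) regions k
           = (standardized (binomial_pmf n (p n)) real k
              + c n * ((standardized (binomial_pmf n (p n)) real k)\<^sup>2 - 1)) / s n"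
proof -
  define m where "m n = 2 * real n * p n + 1" for n
  define T where "T n = standardized (binomial_pmf n (p n)) regions" for n
  define Z where "Z n = standardized (binomial_pmf n (p n)) real" for n
  have "\<exists>c s. \<bar>c\<bar> \<le> 1 / sqrt (m n) \<and> \<bar>s - 1\<bar> \<le> 4 / m n
          \<and> (\<forall>k. T n k = (Z n k + c * ((Z n k)\<^sup>2 - 1)) / s)" if "0 < n" for n
    using p[of n] that unfolding m_def T_def Z_def by (intro regions_standardized_binomial_pmf) auto
  then obtain c s where cs: "\<And>n. 0 < n \<Longrightarrow> \<bar>c n\<bar> \<le> 1 / sqrt (m n) \<and> \<bar>s n - 1\<bar> \<le> 4 / m n
          \<and> (\<forall>k. T n k = (Z n k + c n * ((Z n k)\<^sup>2 - 1)) / s n)"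
    by metis
  have pos: "\<forall>\<^sub>F n in sequentially. 0 < n" by (rule eventually_gt_at_top)
  have m: "filterlim m at_top sequentially"
  proof (rule filterlim_at_top_mono[OF npq always_eventually, rule_format])
    fix n
    have "p n \<in> {0..1}" "0 \<le> real n * p n" using p[of n] by auto
    then show "real n * p n * (1 - p n) \<le> m n"
      using npq_le_np[of "p n" n] unfolding m_def by linarith
  qed
  have "c \<longlonglongrightarrow> 0"
  proof (rule Lim_null_comparison)
    show "\<forall>\<^sub>F n in sequentially. norm (c n) \<le> 1 / sqrt (m n)"
      using pos by eventually_elim (use cs in auto)
    show "(\<lambda>n. 1 / sqrt (m n)) \<longlonglongrightarrow> 0"
      by (intro tendsto_divide_0[OF tendsto_const] filterlim_at_top_imp_at_infinity
          filterlim_compose[OF sqrt_at_top m])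
  qed
  moreover have "(\<lambda>n. s n - 1) \<longlonglongrightarrow> 0"
  proof (rule Lim_null_comparison)
    show "\<forall>\<^sub>F n in sequentially. norm (s n - 1) \<le> 4 / m n"
      using pos by eventually_elim (use cs in auto)
    show "(\<lambda>n. 4 / m n) \<longlonglongrightarrow> 0"
      by (intro tendsto_divide_0[OF tendsto_const] filterlim_at_top_imp_at_infinity m)
  qed
  moreover have "\<forall>\<^sub>F n in sequentially. \<forall>k. T n k = (Z n k + c n * ((Z n k)\<^sup>2 - 1)) / s n"
    using pos by eventually_elim (use cs in blast)
  ultimately show thesis unfolding T_def Z_def LIM_zero_iff by (rule that)
qed

definition centered_bernoulli_char :: "real \<Rightarrow> real \<Rightarrow> complex" where
  "centered_bernoulli_char p u = of_real p * iexp (u * (1 - p)) + of_real (1 - p) * iexp (- (u * p))"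

lemma norm_centered_bernoulli_char_le:
  assumes "p \<in> {0..1}"
  shows "cmod (centered_bernoulli_char p u) \<le> 1"
proof -
  have "cmod (centered_bernoulli_char p u)
      \<le> cmod (of_real p * iexp (u * (1 - p))) + cmod (of_real (1 - p) * iexp (- (u * p)))"
    unfolding centered_bernoulli_char_def by (rule norm_triangle_ineq)
  also have "\<dots> = 1"
    using assms by (simp add: norm_mult del: of_real_diff)
  finally show ?thesis .
qed

lemma norm_iexp_taylor2_le: "cmod (iexp x - (1 + \<i> * x - x\<^sup>2 / 2)) \<le> \<bar>x\<bar> ^ 3 / 6"
proof -
  have "(\<Sum>k\<le>2. (\<i> * complex_of_real x) ^ k / fact k) = 1 + \<i> * x - x\<^sup>2 / 2"
    by (simp add: eval_nat_numeral power2_eq_square algebra_simps)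
  moreover have "fact 3 = (6 :: real)" by (simp add: eval_nat_numeral)
  ultimately show ?thesis using iexp_approx1[of x 2] by (simp add: numeral_3_eq_3)
qed

lemma centered_bernoulli_char_approx:
  assumes p: "p \<in> {0..1}"
  shows "cmod (centered_bernoulli_char p u - (1 - p * (1 - p) * u\<^sup>2 / 2)) \<le> p * (1 - p) * \<bar>u\<bar> ^ 3 / 6"
proof -
  define q where "q = 1 - p"
  define T :: "real \<Rightarrow> complex" where "T x = 1 + \<i> * x - x\<^sup>2 / 2" for x
  have pq: "0 \<le> p" "0 \<le> q" "p + q = 1" using p by (auto simp: q_def)
  have "p * T (u * q) + q * T (- (u * p)) = complex_of_real (1 - p * q * u\<^sup>2 / 2)"
  proof -
    have "p * T (u * q) + q * T (- (u * p)) = complex_of_real ((p + q) - p * q * u\<^sup>2 / 2 * (p + q))"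
      by (simp add: T_def algebra_simps power2_eq_square)
    then show ?thesis using pq(3) by simp
  qed
  then have "centered_bernoulli_char p u - (1 - p * q * u\<^sup>2 / 2)
      = p * (iexp (u * q) - T (u * q)) + q * (iexp (- (u * p)) - T (- (u * p)))"
    by (simp add: centered_bernoulli_char_def q_def algebra_simps)
  also have "cmod \<dots>
      \<le> cmod (p * (iexp (u * q) - T (u * q))) + cmod (q * (iexp (- (u * p)) - T (- (u * p))))"
    by (rule norm_triangle_ineq)
  also have "\<dots> = p * cmod (iexp (u * q) - T (u * q)) + q * cmod (iexp (- (u * p)) - T (- (u * p)))"
    using pq by (simp only: norm_mult norm_of_real abs_of_nonneg)
  also have "\<dots> \<le> p * (\<bar>u * q\<bar> ^ 3 / 6) + q * (\<bar>- (u * p)\<bar> ^ 3 / 6)"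
    using pq norm_iexp_taylor2_le[of "u * q"] norm_iexp_taylor2_le[of "- (u * p)"]
    unfolding T_def by (intro add_mono mult_left_mono) auto
  also have "\<dots> = p * q * \<bar>u\<bar> ^ 3 / 6 * (p\<^sup>2 + q\<^sup>2)"
    using pq by (simp add: abs_mult power_mult_distrib power2_eq_square power3_eq_cube algebra_simps)
  also have "\<dots> \<le> p * q * \<bar>u\<bar> ^ 3 / 6"
  proof -
    have "p\<^sup>2 + q\<^sup>2 = (p + q)\<^sup>2 - 2 * (p * q)" by (simp add: power2_eq_square algebra_simps)
    then have "p\<^sup>2 + q\<^sup>2 \<le> 1" using pq by simp
    then show ?thesis using pq by (simp add: mult_left_le)
  qed
  finally show ?thesis by (simp add: q_def)
qed

lemma char_binomial_pmf_standardized: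
  assumes p: "p \<in> {0..1}"
  shows "char (distr (measure_pmf (binomial_pmf n p)) borel (\<lambda>k. (real k - real n * p) / s)) t
       = centered_bernoulli_char p (t / s) ^ n"
proof -
  define u where "u = t / s"
  have iexp_split:
    "iexp (t * ((real k - real n * p) / s)) = iexp (u * (1 - p)) ^ k * iexp (- (u * p)) ^ (n - k)"
    if "k \<le> n" for k
  proof -
    have "iexp (u * (1 - p)) ^ k * iexp (- (u * p)) ^ (n - k)
        = exp (of_nat k * (\<i> * of_real (u * (1 - p))) + of_nat (n - k) * (\<i> * of_real (- (u * p))))"
      by (simp only: exp_of_nat_mult mult_exp_exp[symmetric])
    also have "of_nat k * (\<i> * of_real (u * (1 - p))) + of_nat (n - k) * (\<i> * of_real (- (u * p)))
        = \<i> * of_real (real k * (u * (1 - p)) + real (n - k) * (- (u * p)))"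
      by (simp add: algebra_simps)
    also have "real k * (u * (1 - p)) + real (n - k) * (- (u * p)) = t * ((real k - real n * p) / s)"
      using that by (simp add: u_def of_nat_diff algebra_simps flip: add_divide_distrib diff_divide_distrib)
    finally show ?thesis ..
  qed
  have "char (distr (measure_pmf (binomial_pmf n p)) borel (\<lambda>k. (real k - real n * p) / s)) t
      = measure_pmf.expectation (binomial_pmf n p) (\<lambda>k. iexp (t * ((real k - real n * p) / s)))"
    unfolding char_def by (subst integral_distr) (auto simp: measurable_pmf_measure1)
  also have "\<dots> = (\<Sum>k\<le>n. (real (n choose k) * p ^ k * (1 - p) ^ (n - k)) *\<^sub>R
                        iexp (t * ((real k - real n * p) / s)))"
    using p by (rule expectation_binomial_pmf')
  also have "\<dots> = (\<Sum>k\<le>n. of_nat (n choose k) * (of_real p * iexp (u * (1 - p))) ^ k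
                     * (of_real (1 - p) * iexp (- (u * p))) ^ (n - k))"
  proof (rule sum.cong)
    fix k assume "k \<in> {..n}"
    then have k: "k \<le> n" by simp
    show "(real (n choose k) * p ^ k * (1 - p) ^ (n - k)) *\<^sub>R iexp (t * ((real k - real n * p) / s))
        = of_nat (n choose k) * (of_real p * iexp (u * (1 - p))) ^ k
          * (of_real (1 - p) * iexp (- (u * p))) ^ (n - k)"
      unfolding iexp_split[OF k]
      by (simp add: scaleR_conv_of_real power_mult_distrib mult_ac del: of_real_diff)
  qed simp
  also have "\<dots> = centered_bernoulli_char p u ^ n"
    unfolding centered_bernoulli_char_def by (rule binomial_ring[symmetric])
  finally show ?thesis by (simp add: u_def)
qed

lemma norm_char_binomial_pmf_standardized_approx:
  fixes p :: real
  assumes p: "p \<in> {0..1}" and npq: "real n * p * (1 - p) > 0" and n: "t\<^sup>2 / 4 \<le> real n"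
  defines "\<sigma> \<equiv> sqrt (real n * p * (1 - p))"
  shows "cmod (char (distr (measure_pmf (binomial_pmf n p)) borel (\<lambda>k. (real k - real n * p) / \<sigma>)) t
                - of_real ((1 + (- t\<^sup>2 / 2) / real n) ^ n))
         \<le> \<bar>t\<bar> ^ 3 / (6 * \<sigma>)"
proof -
  define u where "u = t / \<sigma>"
  have "real n * p * (1 - p) \<noteq> 0" using npq by linarith
  then have nonzero: "real n \<noteq> 0" "p \<noteq> 0" "1 - p \<noteq> 0" by auto
  have \<sigma>: "\<sigma> > 0" "\<sigma>\<^sup>2 = real n * (p * (1 - p))"
    using npq less_imp_le[OF npq] by (simp_all add: \<sigma>_def mult.assoc)
  have pqu: "p * (1 - p) * u\<^sup>2 = t\<^sup>2 / real n"
    using nonzero unfolding u_def power_divide \<sigma>(2) by (simp add: field_simps)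
  have "char (distr (measure_pmf (binomial_pmf n p)) borel (\<lambda>k. (real k - real n * p) / \<sigma>)) t
      = centered_bernoulli_char p u ^ n"
    unfolding u_def using p by (rule char_binomial_pmf_standardized)
  moreover have "1 + (- t\<^sup>2 / 2) / real n = 1 - p * (1 - p) * u\<^sup>2 / 2"
    using pqu by simp
  ultimately have "cmod (char (distr (measure_pmf (binomial_pmf n p)) borel (\<lambda>k. (real k - real n * p) / \<sigma>)) t
                - of_real ((1 + (- t\<^sup>2 / 2) / real n) ^ n))
      = cmod (centered_bernoulli_char p u ^ n - of_real (1 - p * (1 - p) * u\<^sup>2 / 2) ^ n)"
    by (simp only: of_real_power)
  also have "\<dots> \<le> real n * cmod (centered_bernoulli_char p u - of_real (1 - p * (1 - p) * u\<^sup>2 / 2))"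
  proof (rule norm_power_diff)
    show "cmod (centered_bernoulli_char p u) \<le> 1"
      using p by (rule norm_centered_bernoulli_char_le)
    have "t\<^sup>2 / real n \<le> 4" using n nonzero by (simp add: divide_le_eq)
    then show "cmod (complex_of_real (1 - p * (1 - p) * u\<^sup>2 / 2)) \<le> 1"
      unfolding pqu norm_of_real by (simp add: abs_le_iff)
  qed
  also have "\<dots> \<le> real n * (p * (1 - p) * \<bar>u\<bar> ^ 3 / 6)"
    using p by (intro mult_left_mono centered_bernoulli_char_approx) auto
  also have "\<dots> = (real n * (p * (1 - p))) * \<bar>t\<bar> ^ 3 / (6 * \<sigma> ^ 3)"
    unfolding u_def abs_divide power_divide abs_of_pos[OF \<sigma>(1)] by simp
  also have "\<dots> = \<sigma>\<^sup>2 * \<bar>t\<bar> ^ 3 / (6 * \<sigma> ^ 3)"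
    by (simp only: \<sigma>(2))
  also have "\<dots> = \<bar>t\<bar> ^ 3 / (6 * \<sigma>)"
    using \<sigma>(1) by (simp add: power2_eq_square power3_eq_cube)
  finally show ?thesis .
qed

lemma char_binomial_pmf_standardized_tendsto:
  assumes p: "\<And>n. p n \<in> {0..1}"
    and npq: "filterlim (\<lambda>n. real n * p n * (1 - p n)) at_top sequentially"
  shows "(\<lambda>n. char (distr (measure_pmf (binomial_pmf n (p n))) borel
            (\<lambda>k. (real k - real n * p n) / sqrt (real n * p n * (1 - p n)))) t)
         \<longlonglongrightarrow> char std_normal_distribution t"
proof -
  define \<sigma> where "\<sigma> n = sqrt (real n * p n * (1 - p n))" for n
  define \<phi> where "\<phi> n = char (distr (measure_pmf (binomial_pmf n (p n))) borel
                         (\<lambda>k. (real k - real n * p n) / \<sigma> n)) t" for n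
  have "\<forall>\<^sub>F n in sequentially. real n * p n * (1 - p n) > 0"
    using npq by (simp add: filterlim_at_top_dense)
  moreover have "\<forall>\<^sub>F n in sequentially. t\<^sup>2 / 4 \<le> real n"
    using filterlim_real_sequentially unfolding filterlim_at_top by blast
  ultimately have "\<forall>\<^sub>F n in sequentially.
      norm (\<phi> n - of_real ((1 + (- t\<^sup>2 / 2) / real n) ^ n)) \<le> \<bar>t\<bar> ^ 3 / (6 * \<sigma> n)"
  proof eventually_elim
    case (elim n)
    then show ?case unfolding \<phi>_def \<sigma>_def by (rule norm_char_binomial_pmf_standardized_approx[OF p])
  qed
  moreover have "(\<lambda>n. \<bar>t\<bar> ^ 3 / (6 * \<sigma> n)) \<longlonglongrightarrow> 0"
    unfolding \<sigma>_def
    by (intro tendsto_divide_0[OF tendsto_const] filterlim_at_top_imp_at_infinity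
        filterlim_tendsto_pos_mult_at_top[OF tendsto_const _ filterlim_compose[OF sqrt_at_top npq]]) auto
  ultimately have "(\<lambda>n. \<phi> n - of_real ((1 + (- t\<^sup>2 / 2) / real n) ^ n)) \<longlonglongrightarrow> 0"
    by (rule Lim_null_comparison)
  moreover have "(\<lambda>n. of_real ((1 + (- t\<^sup>2 / 2) / real n) ^ n)) \<longlonglongrightarrow> complex_of_real (exp (- t\<^sup>2 / 2))"
    by (intro tendsto_of_real tendsto_exp_limit_sequentially)
  ultimately have "\<phi> \<longlonglongrightarrow> complex_of_real (exp (- t\<^sup>2 / 2))"
    by (rule Lim_transform[rotated])
  then show ?thesis
    by (simp add: \<phi>_def[abs_def] \<sigma>_def char_std_normal_distribution)
qed

lemma lipschitz_cdf_std_normal: "1-lipschitz_on UNIV (cdf std_normal_distribution)"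
proof (rule lipschitz_onI)
  interpret real_distribution std_normal_distribution by (rule real_dist_normal_dist)
  have diff_le: "cdf std_normal_distribution b - cdf std_normal_distribution a \<le> b - a" if "a < b" for a b
  proof -
    have density_le: "std_normal_density x \<le> 1" for x
    proof -
      have "1 / sqrt (2 * pi) \<le> 1" using pi_gt3 by (simp add: divide_le_eq)
      then show ?thesis
        unfolding std_normal_density_def
        using mult_mono[of "1 / sqrt (2 * pi)" 1 "exp (- x\<^sup>2 / 2)" 1] by simp
    qed
    have "emeasure std_normal_distribution {a<..b}
        = (\<integral>\<^sup>+x. ennreal (std_normal_density x) * indicator {a<..b} x \<partial>lborel)"
      by (subst emeasure_density) auto
    also have "\<dots> \<le> (\<integral>\<^sup>+x. indicator {a<..b} x \<partial>lborel)"
      by (intro nn_integral_mono) (auto simp: indicator_def density_le)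
    also have "\<dots> = ennreal (b - a)" using that by simp
    finally have "measure std_normal_distribution {a<..b} \<le> b - a"
      using that by (simp add: measure_def enn2real_leI)
    then show ?thesis using cdf_diff_eq[OF that] by simp
  qed
  fix x y :: real
  show "dist (cdf std_normal_distribution x) (cdf std_normal_distribution y) \<le> 1 * dist x y"
    using diff_le[of x y] diff_le[of y x] cdf_nondecreasing[of x y] cdf_nondecreasing[of y x]
    by (cases x y rule: linorder_cases) (auto simp: dist_real_def)
qed simp

lemma binomial_pmf_standardized_cdf_tendsto:
  assumes p: "\<And>n. p n \<in> {0..1}"
    and npq: "filterlim (\<lambda>n. real n * p n * (1 - p n)) at_top sequentially"
  shows "(\<lambda>n. measure_pmf.prob (binomial_pmf n (p n)) {k. standardized (binomial_pmf n (p n)) real k \<le> w})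
         \<longlonglongrightarrow> cdf std_normal_distribution w"
proof -
  define Z where "Z n k = (real k - real n * p n) / sqrt (real n * p n * (1 - p n))" for n k
  define M where "M n = distr (measure_pmf (binomial_pmf n (p n))) borel (Z n)" for n
  have M: "real_distribution (M n)" for n
    unfolding M_def by (rule prob_space.real_distribution_distr) (auto simp: prob_space_measure_pmf)
  have "weak_conv_m M std_normal_distribution"
    using M real_dist_normal_dist
  proof (rule levy_continuity)
    show "(\<lambda>n. char (M n) t) \<longlonglongrightarrow> char std_normal_distribution t" for t
      unfolding M_def Z_def using p npq by (rule char_binomial_pmf_standardized_tendsto)
  qed
  moreover have "isCont (cdf std_normal_distribution) w"
    using lipschitz_on_continuous_on[OF lipschitz_cdf_std_normal]
    by (simp add: continuous_on_eq_continuous_at)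
  ultimately have "(\<lambda>n. cdf (M n) w) \<longlonglongrightarrow> cdf std_normal_distribution w"
    unfolding weak_conv_m_def weak_conv_def by blast
  moreover have "cdf (M n) w = measure_pmf.prob (binomial_pmf n (p n)) {k. Z n k \<le> w}" for n
    unfolding cdf_def M_def by (subst measure_distr) (auto simp: vimage_def)
  ultimately show ?thesis by (simp add: Z_def standardized_binomial_pmf_real[OF p])
qed

lemma abs_monotone_diff_lt_if_close_on_grid:
  fixes F G :: "real \<Rightarrow> real" and N :: nat
  assumes mono: "mono F" and F01: "\<And>x. F x \<in> {0..1}" and G01: "\<And>x. G x \<in> {0..1}"
    and h: "h > 0"
    and left: "\<And>x. x \<le> a \<Longrightarrow> G x < \<epsilon>" and right: "\<And>x. a + real N * h \<le> x \<Longrightarrow> 1 - \<epsilon> < G x"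
    and step: "\<And>x y. \<bar>x - y\<bar> \<le> h \<Longrightarrow> \<bar>G x - G y\<bar> < \<epsilon>"
    and grid: "\<And>j. j \<le> N \<Longrightarrow> \<bar>F (a + real j * h) - G (a + real j * h)\<bar> < \<epsilon>"
  shows "\<bar>F x - G x\<bar> < 2 * \<epsilon>"
proof -
  define w where "w j = a + real j * h" for j :: nat
  consider "x < a" | "w N \<le> x" | "a \<le> x" "x < w N" by (force simp: not_less)
  then show ?thesis
  proof cases
    case 1
    then have "F x \<le> F (w 0)" using mono by (simp add: w_def monoD)
    then show ?thesis
      using grid[of 0] left[of "w 0"] left[of x] 1 F01[of x] G01[of x] by (auto simp: w_def)
  next
    case 2
    then have "F (w N) \<le> F x" using mono by (simp add: monoD)
    then show ?thesis
      using grid[of N] right[of "w N"] right[of x] 2 F01[of x] G01[of x] by (auto simp: w_def)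
  next
    case 3
    define j where "j = nat \<lfloor>(x - a) / h\<rfloor>"
    have "0 \<le> (x - a) / h" using 3 h by simp
    then have "real j \<le> (x - a) / h" "(x - a) / h < real j + 1"
      unfolding j_def by linarith+
    then have j: "w j \<le> x" "x < w (Suc j)"
      using h by (auto simp: w_def field_simps)
    have "j < N"
    proof (rule ccontr)
      assume "\<not> j < N"
      then have "real N * h \<le> real j * h" using h by (simp add: mult_right_mono)
      then show False using j 3 by (simp add: w_def)
    qed
    have "F (w j) \<le> F x" "F x \<le> F (w (Suc j))" using j mono by (auto simp: monoD)
    moreover have "\<bar>G (w j) - G x\<bar> < \<epsilon>" "\<bar>G (w (Suc j)) - G x\<bar> < \<epsilon>"
      using j step[of "w j" x] step[of "w (Suc j)" x] by (auto simp: w_def algebra_simps)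
    ultimately show ?thesis using grid[of j] grid[of "Suc j"] \<open>j < N\<close> by (auto simp: w_def)
  qed
qed

lemma Polya_uniform_limit_monotone:
  fixes F :: "nat \<Rightarrow> real \<Rightarrow> real" and G :: "real \<Rightarrow> real"
  assumes mono: "\<And>n. mono (F n)"
    and F01: "\<And>n x. F n x \<in> {0..1}" and G01: "\<And>x. G x \<in> {0..1}"
    and cont: "uniformly_continuous_on UNIV G"
    and bot: "(G \<longlongrightarrow> 0) at_bot" and top: "(G \<longlongrightarrow> 1) at_top"
    and lim: "\<And>x. (\<lambda>n. F n x) \<longlonglongrightarrow> G x"
  shows "uniform_limit UNIV F G sequentially"
proof (rule uniform_limitI)
  fix e :: real assume "e > 0"
  define \<epsilon> where "\<epsilon> = e / 2"
  have \<epsilon>: "\<epsilon> > 0" using \<open>e > 0\<close> by (simp add: \<epsilon>_def)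
  obtain d where d: "d > 0" "\<And>x y. \<bar>x - y\<bar> < d \<Longrightarrow> \<bar>G x - G y\<bar> < \<epsilon>"
    using cont \<epsilon> unfolding uniformly_continuous_on_def dist_real_def by blast
  obtain a where a: "\<And>x. x \<le> a \<Longrightarrow> G x < \<epsilon>"
    using order_tendstoD(2)[OF bot \<epsilon>] by (auto simp: eventually_at_bot_linorder)
  obtain b where b: "\<And>x. b \<le> x \<Longrightarrow> 1 - \<epsilon> < G x"
    using order_tendstoD(1)[OF top, of "1 - \<epsilon>"] \<epsilon> by (auto simp: eventually_at_top_linorder)
  define h where "h = d / 2"
  have h: "h > 0" using d by (simp add: h_def)
  define N where "N = nat \<lceil>(b - a) / h\<rceil>"
  have "(b - a) / h \<le> real N" unfolding N_def by linarith
  then have N: "b \<le> a + real N * h" using h by (simp add: divide_le_eq algebra_simps)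
  have "\<forall>\<^sub>F n in sequentially. \<forall>j\<in>{..N}. \<bar>F n (a + real j * h) - G (a + real j * h)\<bar> < \<epsilon>"
    using lim \<epsilon> by (intro eventually_ball_finite) (auto simp: tendsto_iff dist_real_def)
  then show "\<forall>\<^sub>F n in sequentially. \<forall>x\<in>UNIV. dist (F n x) (G x) < e"
  proof eventually_elim
    case (elim n)
    have "\<bar>F n x - G x\<bar> < 2 * \<epsilon>" for x
    proof (rule abs_monotone_diff_lt_if_close_on_grid[OF mono F01 G01 h a])
      show "1 - \<epsilon> < G x" if "a + real N * h \<le> x" for x using that N b by simp
      show "\<bar>G x - G y\<bar> < \<epsilon>" if "\<bar>x - y\<bar> \<le> h" for x y using that d h_def by simp
    qed (use elim in auto)
    then show ?case by (simp add: \<epsilon>_def dist_real_def)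
  qed
qed

lemma binomial_pmf_standardized_uniform_limit:
  assumes p: "\<And>n. p n \<in> {0..1}"
    and npq: "filterlim (\<lambda>n. real n * p n * (1 - p n)) at_top sequentially"
  shows "uniform_limit UNIV
           (\<lambda>n w. measure_pmf.prob (binomial_pmf n (p n))
              {k. standardized (binomial_pmf n (p n)) real k \<le> w})
           (cdf std_normal_distribution) sequentially"
proof (rule Polya_uniform_limit_monotone)
  interpret real_distribution std_normal_distribution by (rule real_dist_normal_dist)
  show "mono (\<lambda>w. measure_pmf.prob (binomial_pmf n (p n))
          {k. standardized (binomial_pmf n (p n)) real k \<le> w})"
    for n
    by (intro monoI measure_pmf.finite_measure_mono) auto
  show "cdf std_normal_distribution x \<in> {0..1}" for x
    using cdf_nonneg cdf_bounded_prob by simp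
  show "uniformly_continuous_on UNIV (cdf std_normal_distribution)"
    by (rule lipschitz_on_uniformly_continuous[OF lipschitz_cdf_std_normal])
  show "(cdf std_normal_distribution \<longlongrightarrow> 0) at_bot" by (rule cdf_lim_at_bot)
  show "(cdf std_normal_distribution \<longlongrightarrow> 1) at_top" by (rule cdf_lim_at_top_prob)
qed (use binomial_pmf_standardized_cdf_tendsto[OF p npq] in auto)

lemma uniform_limit_prob_le_Slutsky:
  fixes P :: "nat \<Rightarrow> 'a pmf" and Z T :: "nat \<Rightarrow> 'a \<Rightarrow> real" and G :: "real \<Rightarrow> real"
  assumes Z: "uniform_limit UNIV (\<lambda>n w. measure_pmf.prob (P n) {x. Z n x \<le> w}) G sequentially"
    and cont: "uniformly_continuous_on UNIV G"
    and close: "\<And>e. e > 0 \<Longrightarrow> (\<lambda>n. measure_pmf.prob (P n) {x. e < \<bar>T n x - Z n x\<bar>}) \<longlonglongrightarrow> 0"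
  shows "uniform_limit UNIV (\<lambda>n w. measure_pmf.prob (P n) {x. T n x \<le> w}) G sequentially"
proof (rule uniform_limitI)
  fix e :: real assume "e > 0"
  then obtain d where d: "d > 0" "\<And>x y. \<bar>x - y\<bar> < d \<Longrightarrow> \<bar>G x - G y\<bar> < e / 3"
    using cont unfolding uniformly_continuous_on_def dist_real_def
    by (metis UNIV_I divide_pos_pos zero_less_numeral)
  define \<eta> where "\<eta> = min (d / 2) (e / 3)"
  have \<eta>: "0 < \<eta>" "\<eta> < d" "\<eta> \<le> e / 3" using d \<open>e > 0\<close> by (auto simp: \<eta>_def)
  have "\<forall>\<^sub>F n in sequentially. \<forall>w\<in>UNIV. dist (measure_pmf.prob (P n) {x. Z n x \<le> w}) (G w) < e / 3"
    using Z \<open>e > 0\<close> by (intro uniform_limitD) auto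
  moreover have "\<forall>\<^sub>F n in sequentially. measure_pmf.prob (P n) {x. \<eta> < \<bar>T n x - Z n x\<bar>} < \<eta>"
    using order_tendstoD(2)[OF close[OF \<eta>(1)] \<eta>(1)] .
  ultimately show "\<forall>\<^sub>F n in sequentially. \<forall>w\<in>UNIV.
      dist (measure_pmf.prob (P n) {x. T n x \<le> w}) (G w) < e"
  proof eventually_elim
    case (elim n)
    let ?pr = "measure_pmf.prob (P n)"
    define B where "B = {x. \<eta> < \<bar>T n x - Z n x\<bar>}"
    have Zw: "\<bar>?pr {x. Z n x \<le> w} - G w\<bar> < e / 3" for w using elim(1) by (simp add: dist_real_def)
    have "\<bar>?pr {x. T n x \<le> w} - G w\<bar> < e" for w
    proof -
      have "{x. T n x \<le> w} \<subseteq> {x. Z n x \<le> w + \<eta>} \<union> B" by (auto simp: B_def)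
      then have "?pr {x. T n x \<le> w} \<le> ?pr {x. Z n x \<le> w + \<eta>} + ?pr B"
        by (rule order_trans[OF measure_pmf.finite_measure_mono measure_Un_le]) auto
      moreover have "{x. Z n x \<le> w - \<eta>} \<subseteq> {x. T n x \<le> w} \<union> B" by (auto simp: B_def)
      then have "?pr {x. Z n x \<le> w - \<eta>} \<le> ?pr {x. T n x \<le> w} + ?pr B"
        by (rule order_trans[OF measure_pmf.finite_measure_mono measure_Un_le]) auto
      moreover have "\<bar>G (w + \<eta>) - G w\<bar> < e / 3" "\<bar>G (w - \<eta>) - G w\<bar> < e / 3"
        using d(2)[of "w + \<eta>" w] d(2)[of "w - \<eta>" w] \<eta> by auto
      ultimately show ?thesis
        using Zw[of "w + \<eta>"] Zw[of "w - \<eta>"] elim(2) \<eta>(3) unfolding B_def by linarith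
    qed
    then show ?case by (simp add: dist_real_def)
  qed
qed

lemma abs_quadratic_perturbation_le:
  fixes z c s M :: real
  assumes s: "s > 0" and z: "\<bar>z\<bar> \<le> M"
  shows "\<bar>(z + c * (z\<^sup>2 - 1)) / s - z\<bar> \<le> M * \<bar>1 / s - 1\<bar> + \<bar>c\<bar> * (M\<^sup>2 + 1) / s"
proof -
  have "(z + c * (z\<^sup>2 - 1)) / s - z = z * (1 / s - 1) + c * (z\<^sup>2 - 1) / s"
    using s by (simp add: field_simps)
  also have "\<bar>\<dots>\<bar> \<le> \<bar>z\<bar> * \<bar>1 / s - 1\<bar> + \<bar>c\<bar> * \<bar>z\<^sup>2 - 1\<bar> / s"
    using abs_triangle_ineq[of "z * (1 / s - 1)" "c * (z\<^sup>2 - 1) / s"] s by (simp add: abs_mult)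
  also have "\<dots> \<le> M * \<bar>1 / s - 1\<bar> + \<bar>c\<bar> * (M\<^sup>2 + 1) / s"
  proof -
    have "\<bar>z\<^sup>2 - 1\<bar> \<le> M\<^sup>2 + 1"
      using z abs_le_square_iff[of z M] by (simp add: abs_le_iff)
    then show ?thesis
      using z s by (intro add_mono mult_right_mono divide_right_mono mult_left_mono) auto
  qed
  finally show ?thesis .
qed

lemma prob_quadratic_perturbation_tendsto_0:
  fixes P :: "nat \<Rightarrow> 'a pmf" and Z :: "nat \<Rightarrow> 'a \<Rightarrow> real" and c s :: "nat \<Rightarrow> real"
  assumes tail: "\<And>n M. M > 0 \<Longrightarrow> measure_pmf.prob (P n) {x. M < \<bar>Z n x\<bar>} \<le> 1 / M\<^sup>2"
    and c: "c \<longlonglongrightarrow> 0" and s: "s \<longlonglongrightarrow> 1" and "e > 0"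
  shows "(\<lambda>n. measure_pmf.prob (P n) {x. e < \<bar>(Z n x + c n * ((Z n x)\<^sup>2 - 1)) / s n - Z n x\<bar>})
         \<longlonglongrightarrow> 0"
proof (rule tendstoI)
  fix \<epsilon> :: real assume "\<epsilon> > 0"
  define M where "M = max 1 (2 / \<epsilon>)"
  have M: "M \<ge> 1" "1 / M\<^sup>2 < \<epsilon>"
  proof -
    show "M \<ge> 1" by (simp add: M_def)
    have "1 / M\<^sup>2 \<le> 1 / M" using \<open>M \<ge> 1\<close> by (simp add: power2_eq_square field_simps)
    also have "\<dots> \<le> 1 / (2 / \<epsilon>)"
      using \<open>\<epsilon> > 0\<close> by (intro divide_left_mono) (auto simp: M_def)
    also have "\<dots> = \<epsilon> / 2" by simp
    finally show "1 / M\<^sup>2 < \<epsilon>" using \<open>\<epsilon> > 0\<close> by simp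
  qed
  define err where "err n = M * \<bar>1 / s n - 1\<bar> + \<bar>c n\<bar> * (M\<^sup>2 + 1) / s n" for n
  have "err \<longlonglongrightarrow> M * \<bar>1 / 1 - 1\<bar> + \<bar>0\<bar> * (M\<^sup>2 + 1) / 1"
    unfolding err_def[abs_def] by (intro tendsto_intros c s) auto
  then have "\<forall>\<^sub>F n in sequentially. err n < e"
    using \<open>e > 0\<close> by (simp add: order_tendstoD(2))
  moreover have "\<forall>\<^sub>F n in sequentially. s n > 0"
    using order_tendstoD(1)[OF s, of 0] by simp
  ultimately show "\<forall>\<^sub>F n in sequentially.
      dist (measure_pmf.prob (P n) {x. e < \<bar>(Z n x + c n * ((Z n x)\<^sup>2 - 1)) / s n - Z n x\<bar>}) 0 < \<epsilon>"
  proof eventually_elim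
    case (elim n)
    have "{x. e < \<bar>(Z n x + c n * ((Z n x)\<^sup>2 - 1)) / s n - Z n x\<bar>} \<subseteq> {x. M < \<bar>Z n x\<bar>}"
    proof
      fix x assume "x \<in> {x. e < \<bar>(Z n x + c n * ((Z n x)\<^sup>2 - 1)) / s n - Z n x\<bar>}"
      then show "x \<in> {x. M < \<bar>Z n x\<bar>}"
        using abs_quadratic_perturbation_le[OF elim(2), of "Z n x" M "c n"] elim(1)
        by (fastforce simp: err_def)
    qed
    then have "measure_pmf.prob (P n) {x. e < \<bar>(Z n x + c n * ((Z n x)\<^sup>2 - 1)) / s n - Z n x\<bar>}
        \<le> measure_pmf.prob (P n) {x. M < \<bar>Z n x\<bar>}"
      by (rule measure_pmf.finite_measure_mono) simp
    also have "\<dots> \<le> 1 / M\<^sup>2" using tail \<open>M \<ge> 1\<close> by simp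
    finally show ?case using M by simp
  qed
qed

lemma prob_standardized_regions_diff_tendsto_0:
  fixes p :: "nat \<Rightarrow> real"
  assumes p: "\<And>n. 0 < p n \<and> p n < 1"
    and npq: "filterlim (\<lambda>n. real n * p n * (1 - p n)) at_top sequentially" and "e > 0"
  shows "(\<lambda>n. measure_pmf.prob (binomial_pmf n (p n))
            {k. e < \<bar>standardized (binomial_pmf n (p n)) regions k
                      - standardized (binomial_pmf n (p n)) real k\<bar>}) \<longlonglongrightarrow> 0"
proof -
  define Z where "Z n = standardized (binomial_pmf n (p n)) real" for n
  define T where "T n = standardized (binomial_pmf n (p n)) regions" for n
  obtain c s where c: "c \<longlonglongrightarrow> 0" and s: "s \<longlonglongrightarrow> 1"
    and T_eq: "\<forall>\<^sub>F n in sequentially. \<forall>k. T n k = (Z n k + c n * ((Z n k)\<^sup>2 - 1)) / s n"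
    using regions_standardized_asymptotics[OF p npq] unfolding T_def Z_def by blast
  have tail: "measure_pmf.prob (binomial_pmf n (p n)) {k. M < \<bar>Z n k\<bar>} \<le> 1 / M\<^sup>2" if "M > 0" for n M
    using integrable_binomial_pmf[of "p n" n] p[of n] that unfolding Z_def
    by (intro prob_abs_standardized_gt_le) auto
  have "(\<lambda>n. measure_pmf.prob (binomial_pmf n (p n))
          {k. e < \<bar>(Z n k + c n * ((Z n k)\<^sup>2 - 1)) / s n - Z n k\<bar>}) \<longlonglongrightarrow> 0"
    using tail c s \<open>e > 0\<close> by (rule prob_quadratic_perturbation_tendsto_0)
  moreover have "\<forall>\<^sub>F n in sequentially. measure_pmf.prob (binomial_pmf n (p n))
          {k. e < \<bar>(Z n k + c n * ((Z n k)\<^sup>2 - 1)) / s n - Z n k\<bar>}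
        = measure_pmf.prob (binomial_pmf n (p n)) {k. e < \<bar>T n k - Z n k\<bar>}"
    using T_eq by eventually_elim simp
  ultimately show ?thesis unfolding T_def Z_def by (rule Lim_transform_eventually)
qed

lemma uniform_limit_imp_SUP_abs_diff_tendsto_0:
  fixes f :: "nat \<Rightarrow> 'a \<Rightarrow> real"
  assumes "uniform_limit UNIV f g sequentially"
  shows "(\<lambda>n. SUP x. \<bar>f n x - g x\<bar>) \<longlonglongrightarrow> 0"
proof (rule tendstoI)
  fix e :: real assume "e > 0"
  then have "\<forall>\<^sub>F n in sequentially. \<forall>x\<in>UNIV. dist (f n x) (g x) < e / 2"
    using assms by (intro uniform_limitD) auto
  then show "\<forall>\<^sub>F n in sequentially. dist (SUP x. \<bar>f n x - g x\<bar>) 0 < e"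
  proof eventually_elim
    case (elim n)
    then have bound: "\<bar>f n x - g x\<bar> \<le> e / 2" for x by (simp add: dist_real_def less_imp_le)
    have "(SUP x. \<bar>f n x - g x\<bar>) \<le> e / 2" using bound by (intro cSUP_least) auto
    moreover have "0 \<le> (SUP x. \<bar>f n x - g x\<bar>)"
    proof -
      have "bdd_above (range (\<lambda>x. \<bar>f n x - g x\<bar>))" using bound by (intro bdd_aboveI2)
      then have "\<bar>f n x - g x\<bar> \<le> (SUP x. \<bar>f n x - g x\<bar>)" for x by (rule cSUP_upper[OF UNIV_I])
      then show ?thesis by (rule order_trans[OF abs_ge_zero])
    qed
    ultimately show ?case using \<open>e > 0\<close> by simp
  qed
qed

lemma filterlim_npq_at_top:
  fixes p :: "nat \<Rightarrow> real"
  assumes p: "\<And>n. 0 < p n \<and> p n < 1"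
    and lim: "filterlim (\<lambda>n. real n powr (1/9) * p n * (1 - p n) powr (1/3)) at_top sequentially"
  shows "filterlim (\<lambda>n. real n * p n * (1 - p n)) at_top sequentially"
proof (rule filterlim_at_top_mono[OF lim])
  have "\<forall>\<^sub>F n in sequentially. 1 \<le> real n powr (1/9) * p n * (1 - p n) powr (1/3)"
    using lim by (simp add: filterlim_at_top)
  then show "\<forall>\<^sub>F n in sequentially.
      real n powr (1/9) * p n * (1 - p n) powr (1/3) \<le> real n * p n * (1 - p n)"
  proof eventually_elim
    case (elim n)
    define a where "a = real n powr (1/9) * p n * (1 - p n) powr (1/3)"
    have pn: "0 < p n" "p n < 1" using p[of n] by auto
    have a1: "1 \<le> a" using elim by (simp add: a_def)
    then have "n > 0" by (cases "n = 0") (auto simp: a_def)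
    have "a ^ 9 = (real n powr (1/9)) ^ 9 * p n ^ 9 * ((1 - p n) powr (1/3)) ^ 9"
      by (simp add: a_def power_mult_distrib)
    also have "(real n powr (1/9)) ^ 9 = real n"
      using \<open>n > 0\<close> by (simp add: powr_power)
    also have "((1 - p n) powr (1/3)) ^ 9 = (1 - p n) ^ 3"
      using pn by (simp add: powr_power)
    also have "real n * p n ^ 9 * (1 - p n) ^ 3 \<le> real n * p n * (1 - p n)"
      using pn by (intro mult_mono mult_left_mono power_decreasing[of 1 _ "p n", simplified]
          power_decreasing[of 1 _ "1 - p n", simplified]) auto
    finally have "a ^ 9 \<le> real n * p n * (1 - p n)" .
    moreover have "a \<le> a ^ 9" using a1 power_increasing[of 1 9 a] by simp
    ultimately show ?case by (simp add: a_def)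
  qed
qed

theorem theorem4:
  fixes p :: "nat \<Rightarrow> real"
  assumes "\<And>n. 0 < p n \<and> p n < 1"
    and "filterlim (\<lambda>n. real n powr (1/9) * p n * (1 - p n) powr (1/3)) at_top sequentially"
  shows "(\<lambda>n. SUP w::real. \<bar>measure_pmf.prob (binomial_pmf n (p n))
            {x. (regions x - measure_pmf.expectation (binomial_pmf n (p n)) regions)
                 / sqrt (measure_pmf.variance (binomial_pmf n (p n)) regions) \<le> w} - Phi w\<bar>)
         \<longlonglongrightarrow> 0"
proof -
  have p: "p n \<in> {0..1}" for n using assms(1)[of n] by simp
  have npq: "filterlim (\<lambda>n. real n * p n * (1 - p n)) at_top sequentially"
    using assms by (rule filterlim_npq_at_top)
  have "uniform_limit UNIV
          (\<lambda>n w. measure_pmf.prob (binomial_pmf n (p n)) {k. standardized (binomial_pmf n (p n)) regions k \<le> w})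
          (cdf std_normal_distribution) sequentially"
    using binomial_pmf_standardized_uniform_limit[OF p npq]
      lipschitz_on_uniformly_continuous[OF lipschitz_cdf_std_normal]
      prob_standardized_regions_diff_tendsto_0[OF assms(1) npq]
    by (rule uniform_limit_prob_le_Slutsky)
  from uniform_limit_imp_SUP_abs_diff_tendsto_0[OF this] show ?thesis
    by (simp add: standardized_def Phi_def)
qed

end
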